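(* Let $r$ be a Lyndon word with $|r|\ge2$ and standard factorization $r=r's'$, and let $u$ be a nonempty word such that $u\le s'$ and $ru$ is a Lyndon word. Then the lexicographically smallest proper nonempty suffix of $ru$ is a suffix of $u$ (i.e., has length at most $|u|$).
   Context: Words are finite sequences over a totally ordered alphabet, compared in lexicographic order (a proper prefix is smaller than the word). A Lyndon word is a nonempty word strictly smaller than each of its proper nonempty suffixes. For a Lyndon word $r$ with $|r|\ge2$, its standard factorization is $r=r's'$ where $s'$ is the longest proper suffix of $r$ that is a Lyndon word; equivalently, $s'$ is the lexicographically smallest proper nonempty suffix of $r$. *)

theory Defs
  imports Main
begin

text \<open>Lexicographic order on words over a totally ordered alphabet; a proper
prefix is smaller than the word (this is the library relation lexordp).\<close>
definition word_less :: "'a::linorder list \<Rightarrow> 'a list \<Rightarrow> bool" where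
  "word_less xs ys \<longleftrightarrow> lexordp (<) xs ys"

definition word_le :: "'a::linorder list \<Rightarrow> 'a list \<Rightarrow> bool" where
  "word_le xs ys \<longleftrightarrow> word_less xs ys \<or> xs = ys"

definition proper_suffix_ne :: "'a list \<Rightarrow> 'a list \<Rightarrow> bool" where
  "proper_suffix_ne v w \<longleftrightarrow> (\<exists>i. 0 < i \<and> i < length w \<and> v = drop i w)"

definition lyndon :: "'a::linorder list \<Rightarrow> bool" where
  "lyndon w \<longleftrightarrow> w \<noteq> [] \<and> (\<forall>v. proper_suffix_ne v w \<longrightarrow> word_less w v)"

definition std_fact :: "'a::linorder list \<Rightarrow> 'a list \<Rightarrow> 'a list \<Rightarrow> bool" where
  "std_fact r r' s' \<longleftrightarrow> r = r' @ s' \<and> proper_suffix_ne s' r \<and> lyndon s' \<and>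
     (\<forall>v. proper_suffix_ne v r \<and> lyndon v \<longrightarrow> length v \<le> length s')"

end

theory Submission
  imports Defs "HOL-Library.List_Lexorder"
begin

text \<open>The smallest proper suffix of a word r is Lyndon: its own proper suffixes are
proper suffixes of r, hence larger. Since s' is the longest Lyndon proper suffix, it is
that smallest suffix. Now let m be the smallest proper suffix of r u. If m were longer
than u, then m = x u with x a proper suffix of r, so u \<le> s' \<le> x \<le> x u = m; but u is
itself a proper suffix of r u, so m \<le> u, whence m = u, contradicting the lengths.\<close>

lemma word_less_iff_less: "word_less xs ys \<longleftrightarrow> xs < (ys :: 'a::linorder list)"
  by (simp add: word_less_def List.lexordp_def list_less_def)

lemma word_le_iff_le: "word_le xs ys \<longleftrightarrow> xs \<le> (ys :: 'a::linorder list)"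
  by (auto simp: word_le_def word_less_iff_less)

lemma le_append_self: "xs \<le> xs @ (ys :: 'a::linorder list)"
  by (cases "ys = []")
    (auto simp: list_le_def list_less_def simp flip: lexordp_conv_lexord intro: lexordp_append_rightI)

lemma proper_suffix_neD: "proper_suffix_ne v w \<Longrightarrow> v \<noteq> [] \<and> length v < length w"
  by (auto simp: proper_suffix_ne_def)

lemma proper_suffix_ne_append: "x \<noteq> [] \<Longrightarrow> u \<noteq> [] \<Longrightarrow> proper_suffix_ne u (x @ u)"
  unfolding proper_suffix_ne_def by (intro exI[of _ "length x"]) simp

lemma proper_suffix_ne_trans:
  assumes "proper_suffix_ne x v" and "proper_suffix_ne v w"
  shows "proper_suffix_ne x w"
proof -
  obtain i j where "0 < i" "i < length v" "x = drop i v" "0 < j" "j < length w" "v = drop j w"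
    using assms by (auto simp: proper_suffix_ne_def)
  then show ?thesis
    unfolding proper_suffix_ne_def by (intro exI[of _ "j + i"]) (simp add: add.commute)
qed

lemma proper_suffix_ne_shorter:
  assumes "proper_suffix_ne x w" and "proper_suffix_ne v w" and "length x < length v"
  shows "proper_suffix_ne x v"
proof -
  obtain i j where "i < length w" "x = drop i w" "0 < j" "v = drop j w"
    using assms(1,2) by (auto simp: proper_suffix_ne_def)
  moreover from this assms(3) have "j < i" by simp
  ultimately show ?thesis
    unfolding proper_suffix_ne_def by (intro exI[of _ "i - j"]) simp
qed

lemma proper_suffix_ne_eq_if_length_eq:
  "proper_suffix_ne x w \<Longrightarrow> proper_suffix_ne v w \<Longrightarrow> length x = length v \<Longrightarrow> x = v"
  by (auto simp: proper_suffix_ne_def intro!: arg_cong[where f = "\<lambda>i. drop i w"])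

lemma finite_proper_suffixes: "finite {v. proper_suffix_ne v w}"
proof (rule finite_subset)
  show "{v. proper_suffix_ne v w} \<subseteq> (\<lambda>i. drop i w) ` {..<length w}"
    by (auto simp: proper_suffix_ne_def)
qed simp

lemma lyndon_if_least_proper_suffix:
  fixes v w :: "'a::linorder list"
  assumes v: "proper_suffix_ne v w" and least: "\<And>x. proper_suffix_ne x w \<Longrightarrow> v \<le> x"
  shows "lyndon v"
  unfolding lyndon_def
proof (intro conjI allI impI)
  show "v \<noteq> []" using proper_suffix_neD[OF v] by simp
next
  fix x assume x: "proper_suffix_ne x v"
  have "v \<le> x" by (rule least[OF proper_suffix_ne_trans[OF x v]])
  moreover have "v \<noteq> x" using proper_suffix_neD[OF x] by auto
  ultimately show "word_less v x" by (simp add: word_less_iff_less)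
qed

lemma std_fact_le_proper_suffix:
  fixes r r' s' x :: "'a::linorder list"
  assumes sf: "std_fact r r' s'" and x: "proper_suffix_ne x r"
  shows "s' \<le> x"
proof -
  define V where "V = {v. proper_suffix_ne v r}"
  have s'V: "s' \<in> V" using sf unfolding V_def std_fact_def by blast
  have "finite V" using finite_proper_suffixes by (simp add: V_def)
  define v where "v = Min V"
  have vV: "v \<in> V" using \<open>finite V\<close> s'V unfolding v_def by (intro Min_in) auto
  have least: "\<And>y. y \<in> V \<Longrightarrow> v \<le> y" using \<open>finite V\<close> unfolding v_def by simp
  have "lyndon v"
    using vV least by (intro lyndon_if_least_proper_suffix[of v r]) (simp_all add: V_def)
  then have "length v \<le> length s'" using sf vV unfolding std_fact_def V_def by blast
  have "v = s'"
  proof (rule ccontr)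
    assume "v \<noteq> s'"
    then have "length v \<noteq> length s'"
      using vV s'V proper_suffix_ne_eq_if_length_eq unfolding V_def by blast
    with \<open>length v \<le> length s'\<close> have "proper_suffix_ne v s'"
      using proper_suffix_ne_shorter[of v r s'] vV s'V by (simp add: V_def)
    then have "s' < v" using sf unfolding std_fact_def lyndon_def word_less_iff_less by blast
    then show False using least[OF s'V] by simp
  qed
  then show ?thesis using least x unfolding V_def by blast
qed

lemma long_proper_suffix_of_append:
  assumes "proper_suffix_ne m (r @ u)" and "length u < length m"
  obtains x where "proper_suffix_ne x r" and "m = x @ u"
proof -
  obtain i where "0 < i" "i < length (r @ u)" "m = drop i (r @ u)"
    using assms(1) by (auto simp: proper_suffix_ne_def)
  with assms(2) show ?thesis
    by (intro that[of "drop i r"]) (auto simp: proper_suffix_ne_def)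
qed

theorem lemma4p20:
  fixes r r' s' u :: "'a::linorder list"
  assumes "lyndon r" and "length r \<ge> 2"
    and "std_fact r r' s'"
    and "u \<noteq> []" and "word_le u s'"
    and "lyndon (r @ u)"
  shows "\<forall>m. proper_suffix_ne m (r @ u) \<and>
           (\<forall>v. proper_suffix_ne v (r @ u) \<longrightarrow> word_le m v)
           \<longrightarrow> length m \<le> length u"
proof (intro allI impI)
  fix m
  assume "proper_suffix_ne m (r @ u) \<and> (\<forall>v. proper_suffix_ne v (r @ u) \<longrightarrow> word_le m v)"
  then have m: "proper_suffix_ne m (r @ u)"
    and least: "\<And>v. proper_suffix_ne v (r @ u) \<Longrightarrow> m \<le> v"
    by (simp_all add: word_le_iff_le)
  show "length m \<le> length u"
  proof (rule ccontr)
    assume "\<not> length m \<le> length u"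
    then obtain x where x: "proper_suffix_ne x r" and m_eq: "m = x @ u"
      using long_proper_suffix_of_append[OF m] by auto
    have "u \<le> s'" using assms(5) by (simp add: word_le_iff_le)
    also have "s' \<le> x" using std_fact_le_proper_suffix[OF assms(3) x] .
    also have "x \<le> m" unfolding m_eq by (rule le_append_self)
    finally have "u \<le> m" .
    moreover have "m \<le> u"
      using assms(1,4) by (intro least proper_suffix_ne_append) (simp_all add: lyndon_def)
    ultimately show False using \<open>\<not> length m \<le> length u\<close> by simp
  qed
qed

end
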